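(* Let $(X,\theta)$ be a one-sided subshift of finite type over a finite alphabet. Let $\varphi,\psi\in\mathcal{C}(X)$ with $\mathcal{L}_\psi\mathbbm{1}=\mathbbm{1}$, let $\mu$ be a $g$-measure for the potential $\psi$, and suppose that $t\mapsto P(t\varphi+\psi)$ is differentiable at $0$. Then for every $\varepsilon>0$ there is $\delta(\varepsilon)>0$ such that for all sufficiently large $n$ \[\mu\Big(\Big\{x\in X:\Big|\frac{S_n\varphi(x)}{n}-\mu(\varphi)\Big|\ge\varepsilon\Big\}\Big)\le\exp(-n\delta(\varepsilon)).\]
   Context: $\mathcal{C}(X)$: real continuous functions on $X$; $S_nf=\sum_{k=0}^{n-1}f\circ\theta^k$; $\mu(\varphi)=\int\varphi\,d\mu$. $C_n$ is the set of $n$-cylinders, and the pressure is $P(f)=\lim_{n\to\infty}\frac1n\log\sum_{C\in C_n}\exp(\sup_{x\in C}S_nf(x))$. The Perron–Frobenius operator is $\mathcal{L}_\psi g(x)=\sum_{y\in\theta^{-1}\{x\}}e^{\psi(y)}g(y)$ on $\mathcal{C}(X)$. If $\mathcal{L}_\psi\mathbbm{1}=\mathbbm{1}$, a $g$-measure for $\psi$ is a Borel probability measure $\mu$ on $X$ with $\mathcal{L}_\psi^*\mu=\mu$, i.e. $\int\mathcal{L}_\psi g\,d\mu=\int g\,d\mu$ for all $g\in\mathcal{C}(X)$. *)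

theory Defs
  imports "HOL-Analysis.Analysis" "HOL-Probability.Probability"
begin

text \<open>One-sided sequences over the alphabet {0..<k} (a finite subset of the discrete space nat),
  carrying the product topology.\<close>

definition sft :: "nat \<Rightarrow> nat list set \<Rightarrow> (nat \<Rightarrow> nat) set" where
  "sft k F = {x. (\<forall>i. x i < k) \<and>
      (\<forall>i. \<forall>w\<in>F. map (\<lambda>j. x (i + j)) [0..<length w] \<noteq> w)}"

definition shift :: "(nat \<Rightarrow> nat) \<Rightarrow> (nat \<Rightarrow> nat)" where
  "shift x = (\<lambda>n. x (Suc n))"

definition birkhoff_sum :: "nat \<Rightarrow> ((nat \<Rightarrow> nat) \<Rightarrow> real) \<Rightarrow> (nat \<Rightarrow> nat) \<Rightarrow> real" where
  "birkhoff_sum n f x = (\<Sum>i<n. f ((shift ^^ i) x))"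

definition cylinders :: "(nat \<Rightarrow> nat) set \<Rightarrow> nat \<Rightarrow> (nat \<Rightarrow> nat) set set" where
  "cylinders X n = {C. \<exists>x\<in>X. C = {y\<in>X. \<forall>i<n. y i = x i}}"

definition pressure :: "(nat \<Rightarrow> nat) set \<Rightarrow> ((nat \<Rightarrow> nat) \<Rightarrow> real) \<Rightarrow> real" where
  "pressure X f = lim (\<lambda>n. (1 / real n) *
      ln (\<Sum>C\<in>cylinders X n. exp (SUP x\<in>C. birkhoff_sum n f x)))"

definition transfer_op :: "(nat \<Rightarrow> nat) set \<Rightarrow> ((nat \<Rightarrow> nat) \<Rightarrow> real) \<Rightarrow>
    ((nat \<Rightarrow> nat) \<Rightarrow> real) \<Rightarrow> (nat \<Rightarrow> nat) \<Rightarrow> real" where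
  "transfer_op X \<psi> g x = (\<Sum>y\<in>{y\<in>X. shift y = x}. exp (\<psi> y) * g y)"

definition g_measure :: "(nat \<Rightarrow> nat) set \<Rightarrow> ((nat \<Rightarrow> nat) \<Rightarrow> real) \<Rightarrow> (nat \<Rightarrow> nat) measure \<Rightarrow> bool" where
  "g_measure X \<psi> \<mu> \<longleftrightarrow> prob_space \<mu> \<and> sets \<mu> = sets (restrict_space borel X) \<and>
     (\<forall>g. continuous_on X g \<longrightarrow>
        (\<integral>x. transfer_op X \<psi> g x \<partial>\<mu>) = (\<integral>x. g x \<partial>\<mu>))"

end

theory Submission
  imports Defs
begin

text \<open>
  Write p(t) = P(t\<phi> + \<psi>) and m = \<mu>(\<phi>). The partition functions Z_n(f) are submultiplicative,
  so by Fekete's lemma p(t) is a genuine limit of (1/n) log Z_n(t\<phi> + \<psi>). Duality of \<mu> under the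
  transfer operator gives \<integral> exp(t S_n\<phi>) d\<mu> = \<integral> L_\<psi>^n(exp(t S_n\<phi>)) d\<mu> \<le> Z_n(t\<phi> + \<psi>), and Jensen's
  inequality then yields p(t) \<ge> t m. Conversely L_\<psi>^n 1 = 1, together with the bounded distortion of
  Birkhoff sums of the continuous \<psi> on cylinders and the finite memory of the subshift, shows that
  Z_n(\<psi>) grows subexponentially, i.e. p(0) \<le> 0. So p(t) - t m attains its minimum 0 at t = 0, and
  differentiability forces p'(0) = m. Hence p(\<plusminus>t) < \<plusminus>t m + t\<epsilon>/2 for some small t > 0, and the
  Chernoff bound with exponential moments controlled by Z_n(\<plusminus>t\<phi> + \<psi>) gives the estimate with
  \<delta> = t\<epsilon>/4.
\<close>

section \<open>Preliminaries from analysis and probability\<close>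

lemma subadditive_iterate:
  fixes a :: "nat \<Rightarrow> real"
  assumes "\<And>m n. a (m + n) \<le> a m + a n"
  shows "a (q * m + j) \<le> real q * a m + a j"
proof (induction q)
  case (Suc q)
  have "a (Suc q * m + j) \<le> a m + a (q * m + j)"
    using assms[of m "q * m + j"] by (simp add: add.assoc)
  then show ?case using Suc by (simp add: algebra_simps)
qed simp

lemma subadditive_le_linear:
  fixes a :: "nat \<Rightarrow> real"
  assumes subadd: "\<And>m n. a (m + n) \<le> a m + a n"
    and "0 < m" and K: "\<And>j. j \<le> m \<Longrightarrow> \<bar>a j\<bar> \<le> K"
  shows "a n \<le> real n * (a m / real m) + 2 * K"
proof -
  define q j where "q = n div m" and "j = n mod m"
  have n_eq: "n = q * m + j" and "j < m"
    using \<open>0 < m\<close> by (simp_all add: q_def j_def)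
  have "real q * a m = (real n - real j) * (a m / real m)"
    using \<open>0 < m\<close> by (simp add: n_eq field_simps)
  also have "\<dots> \<le> real n * (a m / real m) + K"
  proof -
    have "\<bar>real j * (a m / real m)\<bar> \<le> \<bar>a m\<bar>"
      using \<open>j < m\<close> by (simp add: abs_mult field_simps mult_right_mono)
    then show ?thesis
      using K[of m] abs_ge_minus_self[of "real j * (a m / real m)"]
      by (simp only: left_diff_distrib) linarith
  qed
  finally show ?thesis
    using subadditive_iterate[OF subadd, of q m j] K[of j] \<open>j < m\<close> n_eq by simp
qed

lemma subadditive_convergent:
  fixes a :: "nat \<Rightarrow> real"
  assumes subadd: "\<And>m n. a (m + n) \<le> a m + a n" and lower: "\<And>n. real n * c \<le> a n"
  shows "convergent (\<lambda>n. a n / real n)"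
proof -
  define L where "L = (INF n\<in>{1..}. a n / real n)"
  have bdd: "bdd_below ((\<lambda>n. a n / real n) ` {1..})"
    using lower by (intro bdd_belowI2[of _ c]) (simp add: field_simps)
  have L_le: "L \<le> a n / real n" if "n \<ge> 1" for n
    unfolding L_def using that bdd by (intro cINF_lower) auto
  have "(\<lambda>n. a n / real n) \<longlonglongrightarrow> L"
  proof (rule LIMSEQ_I)
    fix r :: real assume r: "r > 0"
    obtain m where m: "m \<ge> 1" "a m / real m < L + r/2"
      using cINF_less_iff[OF _ bdd, of "L + r/2"] r by (auto simp: L_def)
    define K where "K = Max ((\<lambda>j. \<bar>a j\<bar>) ` {..m})"
    have K: "\<bar>a j\<bar> \<le> K" if "j \<le> m" for j
      unfolding K_def using that by (intro Max_ge) auto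
    obtain N :: nat where N: "real N > 4 * K / r"
      using reals_Archimedean2 by blast
    have "norm (a n / real n - L) < r" if n: "n \<ge> max N 1" for n
    proof -
      have "a n / real n \<le> a m / real m + 2 * K / real n"
        using subadditive_le_linear[OF subadd _ K, of m n] m n by (simp add: field_simps)
      moreover have "4 * K / r < real n"
        using N n by (smt (verit) of_nat_le_iff max.boundedE)
      then have "2 * K / real n < r / 2"
        using n r by (simp add: field_simps)
      ultimately show ?thesis
        using m L_le[of n] n by simp
    qed
    then show "\<exists>N. \<forall>n\<ge>N. norm (a n / real n - L) < r" by blast
  qed
  then show ?thesis by (rule convergentI)
qed

lemma has_derivative_at_0_if_supporting_line:
  fixes f :: "real \<Rightarrow> real"
  assumes "f differentiable (at 0)" "f 0 = 0" "\<And>s. s * m \<le> f s"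
  shows "(f has_real_derivative m) (at 0)"
proof -
  obtain D where D: "(f has_real_derivative D) (at 0)"
    using assms(1) by (auto simp: real_differentiable_def)
  have "((\<lambda>s. f s - s * m) has_real_derivative D - m) (at 0)"
    by (auto intro!: derivative_eq_intros D)
  then have "D - m = 0"
    by (rule DERIV_local_min[where d = 1]) (use assms(2,3) in auto)
  then show ?thesis using D by simp
qed

lemma secant_bounds_near_0:
  fixes f :: "real \<Rightarrow> real"
  assumes "(f has_real_derivative m) (at 0)" "f 0 = 0" "0 < \<epsilon>"
  obtains t where "0 < t" "f t < t * (m + \<epsilon>)" "f (- t) < - t * (m - \<epsilon>)"
proof -
  have "(\<lambda>h. f h / h) \<midarrow>0\<rightarrow> m"
    using assms(1,2) by (simp add: DERIV_def)
  then obtain d where d: "0 < d" "\<And>h. h \<noteq> 0 \<Longrightarrow> \<bar>h\<bar> < d \<Longrightarrow> \<bar>f h / h - m\<bar> < \<epsilon>"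
    using assms(3) by (force simp: LIM_eq)
  define t where "t = d / 2"
  have t: "0 < t" "\<bar>t\<bar> < d" "\<bar>- t\<bar> < d"
    using d(1) by (auto simp: t_def)
  have "f t / t < m + \<epsilon>" "m - \<epsilon> < f (- t) / (- t)"
    using d(2)[of t] d(2)[of "- t"] t by auto
  then show ?thesis
    using that t(1) by (simp add: field_simps)
qed

lemma eventually_twice_exp_le:
  fixes c :: real
  assumes "0 < c"
  shows "eventually (\<lambda>n. 2 * exp (- real n * (2 * c)) \<le> exp (- real n * c)) sequentially"
proof -
  obtain N :: nat where N: "ln 2 / c < real N"
    using reals_Archimedean2 by blast
  show ?thesis
    using eventually_ge_at_top[of N]
  proof eventually_elim
    case (elim n)
    then have "ln 2 / c < real n"
      using N by linarith
    then have "ln 2 < real n * c"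
      using assms by (simp add: field_simps)
    then have "2 \<le> exp (real n * c)"
      by (metis exp_ln less_eq_real_def exp_less_mono zero_less_numeral)
    then have "2 * exp (- real n * (2 * c)) \<le> exp (real n * c) * exp (- real n * (2 * c))"
      by simp
    then show ?case by (simp flip: exp_add add: algebra_simps)
  qed
qed

lemma (in prob_space) deviation_le_exponential_moments:
  fixes S :: "'a \<Rightarrow> real"
  assumes [measurable]: "S \<in> borel_measurable M"
    and "0 < t" "0 < c"
    and "integrable M (\<lambda>x. exp (t * S x))" "integrable M (\<lambda>x. exp (- t * S x))"
  shows "prob {x\<in>space M. \<epsilon> \<le> \<bar>S x / c - m\<bar>}
    \<le> exp (- t * (c * (m + \<epsilon>))) * expectation (\<lambda>x. exp (t * S x))
      + exp (t * (c * (m - \<epsilon>))) * expectation (\<lambda>x. exp (- t * S x))"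
proof -
  have set_integrable: "set_integrable M (space M) g" if "integrable M g" for g :: "'a \<Rightarrow> real"
    unfolding set_integrable_def using that by (intro integrable_mult_indicator) auto
  have "{x\<in>space M. \<epsilon> \<le> \<bar>S x / c - m\<bar>}
      \<subseteq> {x\<in>space M. c * (m + \<epsilon>) \<le> S x} \<union> {x\<in>space M. S x \<le> c * (m - \<epsilon>)}"
    using \<open>0 < c\<close> by (auto simp: abs_le_iff field_simps)
  then have "prob {x\<in>space M. \<epsilon> \<le> \<bar>S x / c - m\<bar>}
      \<le> prob {x\<in>space M. c * (m + \<epsilon>) \<le> S x} + prob {x\<in>space M. S x \<le> c * (m - \<epsilon>)}"
    by (intro order.trans[OF finite_measure_mono measure_Un_le]) auto
  also have "\<dots> \<le> exp (- t * (c * (m + \<epsilon>))) * expectation (\<lambda>x. exp (t * S x))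
      + exp (t * (c * (m - \<epsilon>))) * expectation (\<lambda>x. exp (- t * S x))"
    using Chernoff_ineq_ge[OF \<open>0 < t\<close> set_integrable[OF assms(4)], of "c * (m + \<epsilon>)"]
      Chernoff_ineq_le[OF \<open>0 < t\<close> set_integrable[OF assms(5)], of "c * (m - \<epsilon>)"] assms(4,5)
    by (intro add_mono) (simp_all add: set_integral_space)
  finally show ?thesis .
qed

section \<open>The one-sided shift space\<close>

lemma open_coordinates:
  assumes "finite I"
  shows "open {y :: 'i \<Rightarrow> 'a :: discrete_topology. \<forall>i\<in>I. P i (y i)}"
  using product_topology_basis'[OF assms, of "\<lambda>i. {a. P i a}" id]
  by (simp add: discrete_topology_class.open_discrete)

lemma closed_coordinates:
  assumes "finite I"
  shows "closed {y :: 'i \<Rightarrow> 'a :: discrete_topology. \<forall>i\<in>I. P i (y i)}"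
proof -
  have "- {y :: 'i \<Rightarrow> 'a. \<forall>i\<in>I. P i (y i)} = (\<Union>i\<in>I. {y. \<forall>j\<in>{i}. \<not> P i (y j)})"
    by auto
  moreover have "open \<dots>"
    by (intro open_UN ballI open_coordinates) simp
  ultimately show ?thesis by (simp add: closed_def)
qed

lemma open_cylinder: "open {y :: nat \<Rightarrow> 'a :: discrete_topology. \<forall>i<r. y i = x i}"
  using open_coordinates[of "{..<r}" "\<lambda>i a. a = x i"] by (simp add: lessThan_def)

lemma open_contains_cylinder:
  fixes A :: "(nat \<Rightarrow> 'a :: topological_space) set"
  assumes "open A" "x \<in> A"
  obtains r where "\<And>y. \<forall>i<r. y i = x i \<Longrightarrow> y \<in> A"
proof -
  have "openin (product_topology (\<lambda>i. euclidean) UNIV) A"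
    using assms(1) by (simp add: open_fun_def)
  from product_topology_open_contains_basis[OF this assms(2)]
  obtain U where U: "x \<in> (\<Pi>\<^sub>E i\<in>UNIV. U i)" "finite {i. U i \<noteq> topspace euclidean}"
      "(\<Pi>\<^sub>E i\<in>UNIV. U i) \<subseteq> A"
    by blast
  define r where "r = Suc (Max (insert 0 {i. U i \<noteq> UNIV}))"
  have "y \<in> A" if "\<forall>i<r. y i = x i" for y
  proof -
    have "y i \<in> U i" for i
    proof (cases "U i = UNIV")
      case False
      then have "i < r" using U(2) by (auto simp: r_def less_Suc_eq_le intro: Max_ge)
      then show ?thesis using that U(1) by (auto simp: PiE_iff)
    qed auto
    then show ?thesis using U(3) by auto
  qed
  then show ?thesis using that by blast
qed

lemma continuous_on_iff_cylinders:
  fixes g :: "(nat \<Rightarrow> 'a :: discrete_topology) \<Rightarrow> real"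
  shows "continuous_on X g \<longleftrightarrow>
    (\<forall>x\<in>X. \<forall>e>0. \<exists>r. \<forall>y\<in>X. (\<forall>i<r. y i = x i) \<longrightarrow> \<bar>g y - g x\<bar> < e)"
proof
  assume g: "continuous_on X g"
  show "\<forall>x\<in>X. \<forall>e>0. \<exists>r. \<forall>y\<in>X. (\<forall>i<r. y i = x i) \<longrightarrow> \<bar>g y - g x\<bar> < e"
  proof (intro ballI allI impI)
    fix x e assume x: "x \<in> X" and e: "(e::real) > 0"
    obtain A where A: "open A" "x \<in> A" "\<forall>y\<in>X. y \<in> A \<longrightarrow> g y \<in> ball (g x) e"
      using g x e unfolding continuous_on_topological by (meson centre_in_ball open_ball)
    obtain r where "\<And>y. \<forall>i<r. y i = x i \<Longrightarrow> y \<in> A"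
      using open_contains_cylinder[OF A(1,2)] by blast
    then show "\<exists>r. \<forall>y\<in>X. (\<forall>i<r. y i = x i) \<longrightarrow> \<bar>g y - g x\<bar> < e"
      using A(3) by (intro exI[of _ r]) (auto simp: dist_real_def abs_minus_commute)
  qed
next
  assume cyl: "\<forall>x\<in>X. \<forall>e>0. \<exists>r. \<forall>y\<in>X. (\<forall>i<r. y i = x i) \<longrightarrow> \<bar>g y - g x\<bar> < e"
  show "continuous_on X g"
    unfolding continuous_on_topological
  proof (intro ballI allI impI)
    fix x B assume x: "x \<in> X" and B: "open B" "g x \<in> B"
    obtain e where e: "e > 0" "ball (g x) e \<subseteq> B"
      using B open_contains_ball by blast
    obtain r where "\<forall>y\<in>X. (\<forall>i<r. y i = x i) \<longrightarrow> \<bar>g y - g x\<bar> < e"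
      using cyl x e(1) by blast
    then show "\<exists>A. open A \<and> x \<in> A \<and> (\<forall>y\<in>X. y \<in> A \<longrightarrow> g y \<in> B)"
      using open_cylinder[of r x] e(2)
      by (intro exI[of _ "{y. \<forall>i<r. y i = x i}"])
        (auto simp: dist_real_def abs_minus_commute subset_iff)
  qed
qed

lemma compact_uniformly_continuous_on_cylinders:
  fixes g :: "(nat \<Rightarrow> 'a :: discrete_topology) \<Rightarrow> real"
  assumes "compact X" "continuous_on X g" "e > 0"
  obtains R where "\<And>y y'. y \<in> X \<Longrightarrow> y' \<in> X \<Longrightarrow> \<forall>i<R. y i = y' i \<Longrightarrow> \<bar>g y - g y'\<bar> < e"
proof -
  have "\<forall>x\<in>X. \<exists>r. \<forall>y\<in>X. (\<forall>i<r. y i = x i) \<longrightarrow> \<bar>g y - g x\<bar> < e/2"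
    using assms(2,3) half_gt_zero unfolding continuous_on_iff_cylinders by blast
  then obtain r where r: "\<And>x y. x \<in> X \<Longrightarrow> y \<in> X \<Longrightarrow> \<forall>i<r x. y i = x i \<Longrightarrow> \<bar>g y - g x\<bar> < e/2"
    by metis
  obtain T where T: "T \<subseteq> X" "finite T" "X \<subseteq> (\<Union>x\<in>T. {y. \<forall>i<r x. y i = x i})"
    using compactE_image[OF assms(1), of X "\<lambda>x. {y. \<forall>i<r x. y i = x i}"] open_cylinder by blast
  define R where "R = Max (insert 0 (r ` T))"
  have "\<bar>g y - g y'\<bar> < e" if y: "y \<in> X" "y' \<in> X" "\<forall>i<R. y i = y' i" for y y'
  proof -
    obtain x where x: "x \<in> T" "\<forall>i<r x. y i = x i" using T(3) y(1) by blast
    have "r x \<le> R" unfolding R_def using T(2) x(1) by (intro Max_ge) auto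
    then have "\<bar>g y - g x\<bar> < e/2" "\<bar>g y' - g x\<bar> < e/2" using r x T(1) y by auto
    then show ?thesis by linarith
  qed
  then show ?thesis using that by blast
qed

lemma funpow_shift: "(shift ^^ n) x = (\<lambda>i. x (i + n))"
  by (induction n arbitrary: x) (auto simp: shift_def)

lemma continuous_on_shift_iterate: "continuous_on A (shift ^^ n)"
  unfolding funpow_shift
  by (intro continuous_on_coordinatewise_then_product
      continuous_on_subset[OF continuous_on_product_coordinates]) auto

lemma birkhoff_sum_0 [simp]: "birkhoff_sum 0 f x = 0"
  by (simp add: birkhoff_sum_def)

lemma birkhoff_sum_add:
  "birkhoff_sum (n + m) f x = birkhoff_sum n f x + birkhoff_sum m f ((shift ^^ n) x)"
proof (induction m)
  case (Suc m)
  have "(shift ^^ m) ((shift ^^ n) x) = (shift ^^ (n + m)) x"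
    by (simp add: funpow_add add.commute)
  then show ?case using Suc by (simp add: birkhoff_sum_def)
qed simp

lemma birkhoff_sum_Suc: "birkhoff_sum (Suc n) f x = f x + birkhoff_sum n f (shift x)"
  using birkhoff_sum_add[of 1 n f x] by (simp add: birkhoff_sum_def)

lemma birkhoff_sum_affine:
  "birkhoff_sum n (\<lambda>x. t * f x + g x) x = t * birkhoff_sum n f x + birkhoff_sum n g x"
  by (simp add: birkhoff_sum_def sum.distrib sum_distrib_left)

section \<open>Subshifts of finite type\<close>

lemma sft_as_intersection:
  "sft k F = (\<Inter>i. {x. \<forall>j\<in>{i}. x j < k}) \<inter>
     (\<Inter>i. \<Inter>w\<in>F. - {x. \<forall>j\<in>{i..<i + length w}. x j = w ! (j - i)})"
proof -
  have window: "(\<forall>j\<in>{i..<i + length w}. x j = w ! (j - i)) \<longleftrightarrow> (\<forall>j<length w. x (i + j) = w ! j)"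
    for x :: "nat \<Rightarrow> nat" and i w
    by auto (metis add_diff_inverse_nat add_less_cancel_left not_less)
  have map_eq: "map (\<lambda>j. x (i + j)) [0..<length w] = w \<longleftrightarrow> (\<forall>j<length w. x (i + j) = w ! j)"
    for x :: "nat \<Rightarrow> nat" and i w
    unfolding list_eq_iff_nth_eq[of "map _ _"] by auto
  show ?thesis
    unfolding sft_def window map_eq[symmetric] by auto
qed

lemma closed_sft: "closed (sft k F)"
proof -
  have "closed {x :: nat \<Rightarrow> nat. \<forall>j\<in>{i}. x j < k}" for i
    by (rule closed_coordinates) simp
  moreover have "open {x :: nat \<Rightarrow> nat. \<forall>j\<in>{i..<i + length w}. x j = w ! (j - i)}" for i w
    by (rule open_coordinates) simp
  ultimately show ?thesis
    unfolding sft_as_intersection by (intro closed_Int closed_INT ballI closed_Compl) auto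
qed

lemma compact_sft: "compact (sft k F)"
proof -
  have "compactin (product_topology (\<lambda>i. euclidean) UNIV) (\<Pi>\<^sub>E i\<in>UNIV. {..<k})"
    by (subst compactin_PiE) (auto intro: finite_imp_compact)
  then have "compact (\<Pi>\<^sub>E i\<in>UNIV. {..<k})"
    by (simp add: euclidean_product_topology)
  moreover have "sft k F = (\<Pi>\<^sub>E i\<in>UNIV. {..<k}) \<inter> sft k F"
    by (auto simp: sft_def PiE_iff)
  ultimately show ?thesis using closed_sft by (metis compact_Int_closed)
qed

lemma continuous_on_sft_bounded:
  fixes g :: "(nat \<Rightarrow> nat) \<Rightarrow> real"
  assumes "continuous_on (sft k F) g"
  obtains B where "\<And>x. x \<in> sft k F \<Longrightarrow> \<bar>g x\<bar> \<le> B"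
  using compact_imp_bounded[OF compact_continuous_image[OF assms compact_sft]]
  by (auto simp: bounded_iff intro: that)

lemma shift_in_sft:
  assumes "x \<in> sft k F"
  shows "shift x \<in> sft k F"
proof -
  have "map (\<lambda>j. x (Suc i + j)) [0..<length w] \<noteq> w" if "w \<in> F" for i w
    using assms that unfolding sft_def by blast
  then show ?thesis using assms unfolding sft_def shift_def by auto
qed

lemma shift_iterate_in_sft: "x \<in> sft k F \<Longrightarrow> (shift ^^ n) x \<in> sft k F"
  by (induction n) (auto simp: shift_in_sft)

lemma continuous_on_shift_iterate_comp:
  assumes "continuous_on (sft k F) g"
  shows "continuous_on (sft k F) (\<lambda>x. g ((shift ^^ n) x))"
  by (rule continuous_on_compose2[OF assms continuous_on_shift_iterate])
    (auto intro: shift_iterate_in_sft)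

lemma continuous_on_birkhoff_sum:
  assumes "continuous_on (sft k F) f"
  shows "continuous_on (sft k F) (birkhoff_sum n f)"
  unfolding birkhoff_sum_def[abs_def]
  by (intro continuous_on_sum continuous_on_shift_iterate_comp assms)

lemma birkhoff_sum_bounded:
  assumes "\<And>x. x \<in> sft k F \<Longrightarrow> \<bar>f x\<bar> \<le> B" "y \<in> sft k F"
  shows "\<bar>birkhoff_sum n f y\<bar> \<le> real n * B"
proof -
  have "\<bar>birkhoff_sum n f y\<bar> \<le> (\<Sum>i<n. \<bar>f ((shift ^^ i) y)\<bar>)"
    unfolding birkhoff_sum_def by (rule sum_abs)
  also have "\<dots> \<le> (\<Sum>i<n. B)"
    by (intro sum_mono assms shift_iterate_in_sft)
  finally show ?thesis by simp
qed

lemma birkhoff_sum_distortion: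
  assumes R: "\<And>y y'. y \<in> sft k F \<Longrightarrow> y' \<in> sft k F \<Longrightarrow> \<forall>i<R. y i = y' i \<Longrightarrow> \<bar>f y - f y'\<bar> < \<eta>"
    and B: "\<And>x. x \<in> sft k F \<Longrightarrow> \<bar>f x\<bar> \<le> B"
    and y: "y \<in> sft k F" "y' \<in> sft k F" "\<forall>i<n. y i = y' i"
  shows "birkhoff_sum n f y \<le> birkhoff_sum n f y' + real n * \<eta> + 2 * B * real R"
proof -
  have "0 \<le> B" using B[OF y(1)] by linarith
  have "0 < \<eta>" using R[OF y(1) y(1)] by simp
  have term_le: "f ((shift ^^ i) y) - f ((shift ^^ i) y') \<le> \<eta> + (if n < i + R then 2 * B else 0)"
    if "i < n" for i
  proof (cases "n < i + R")
    case True
    have "\<bar>f ((shift ^^ i) y)\<bar> \<le> B" "\<bar>f ((shift ^^ i) y')\<bar> \<le> B"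
      using B y shift_iterate_in_sft by blast+
    then show ?thesis using True \<open>0 < \<eta>\<close> by simp
  next
    case False
    then have "\<forall>j<R. (shift ^^ i) y j = (shift ^^ i) y' j"
      using y(3) by (auto simp: funpow_shift)
    then have "\<bar>f ((shift ^^ i) y) - f ((shift ^^ i) y')\<bar> < \<eta>"
      using R y shift_iterate_in_sft by blast
    then show ?thesis using False by simp
  qed
  have "card {i\<in>{..<n}. n < i + R} \<le> card {n - R..<n}"
    by (intro card_mono) auto
  then have tail_card: "real (card {i\<in>{..<n}. n < i + R}) \<le> real R"
    by simp
  have "(\<Sum>i<n. if n < i + R then 2 * B else 0) = real (card {i\<in>{..<n}. n < i + R}) * (2 * B)"
    by (simp add: sum.inter_filter[symmetric])
  also have "\<dots> \<le> real R * (2 * B)"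
    using tail_card \<open>0 \<le> B\<close> by (intro mult_right_mono) auto
  finally have "(\<Sum>i<n. if n < i + R then 2 * B else 0) \<le> 2 * B * real R"
    by (metis mult.commute)
  moreover have "birkhoff_sum n f y - birkhoff_sum n f y'
      \<le> (\<Sum>i<n. \<eta> + (if n < i + R then 2 * B else 0))"
    unfolding birkhoff_sum_def sum_subtractf[symmetric] by (intro sum_mono term_le) simp
  ultimately show ?thesis by (simp add: sum.distrib)
qed

lemma shift_case_nat [simp]: "shift (case_nat a x) = x"
  by (simp add: shift_def)

lemma case_nat_shift: "case_nat (y 0) (shift y) = y"
  by (auto simp: shift_def fun_eq_iff split: nat.split)

locale finite_type_shift =
  fixes k :: nat and F :: "nat list set"
  assumes finite_F: "finite F"
begin

abbreviation X where "X \<equiv> sft k F"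

definition window :: nat where "window = Max (insert 0 (length ` F))"

lemma length_le_window: "w \<in> F \<Longrightarrow> length w \<le> window"
  unfolding window_def using finite_F by (intro Max_ge) auto

lemma sft_memI_windows:
  assumes "\<And>i. z i < k"
    and "\<And>i. \<exists>y\<in>X. \<exists>i'. \<forall>j<window. z (i + j) = y (i' + j)"
  shows "z \<in> X"
proof -
  have "map (\<lambda>j. z (i + j)) [0..<length w] \<noteq> w" if w: "w \<in> F" for i w
  proof -
    obtain y i' where y: "y \<in> X" "\<forall>j<window. z (i + j) = y (i' + j)"
      using assms(2) by blast
    have "map (\<lambda>j. z (i + j)) [0..<length w] = map (\<lambda>j. y (i' + j)) [0..<length w]"
      using y(2) length_le_window[OF w] by (intro map_cong) auto
    then show ?thesis using y(1) w by (simp add: sft_def del: map_eq_conv)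
  qed
  then show ?thesis using assms(1) by (simp add: sft_def)
qed

lemma case_nat_in_sft_if_agree:
  assumes ax: "case_nat a x \<in> X" and y: "y \<in> X" and agree: "\<forall>i<window. y i = x i"
  shows "case_nat a y \<in> X"
proof (rule sft_memI_windows)
  fix i
  have "case_nat a x 0 < k" "\<And>i. y i < k"
    using ax y unfolding sft_def by blast+
  then show "case_nat a y i < k" by (cases i) auto
  show "\<exists>z\<in>X. \<exists>i'. \<forall>j<window. case_nat a y (i + j) = z (i' + j)"
  proof (cases i)
    case 0
    have "\<forall>j<window. case_nat a y j = case_nat a x j"
      using agree by (auto split: nat.split)
    then show ?thesis using ax 0 by (intro bexI[of _ "case_nat a x"] exI[of _ 0]) auto
  next
    case (Suc i')
    then show ?thesis using y by (intro bexI[of _ y] exI[of _ i']) auto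
  qed
qed

lemma glue_in_sft:
  assumes y: "y \<in> X" "y' \<in> X" and "window \<le> n"
    and agree: "\<forall>i. n - window \<le> i \<and> i < n \<longrightarrow> y i = y' i"
  shows "(\<lambda>i. if i < n then y i else y' i) \<in> X"
proof (rule sft_memI_windows)
  fix i
  show "(if i < n then y i else y' i) < k"
    using y by (simp add: sft_def)
  show "\<exists>z\<in>X. \<exists>i'. \<forall>j<window. (if i + j < n then y (i + j) else y' (i + j)) = z (i' + j)"
  proof (cases "i + window \<le> n")
    case True
    then show ?thesis using y(1) by (intro bexI[of _ y] exI[of _ i]) auto
  next
    case False
    then show ?thesis using y(2) agree by (intro bexI[of _ y'] exI[of _ i]) auto
  qed
qed

section \<open>The transfer operator\<close>

lemma transfer_op_eq_sum_letters:
  "transfer_op X \<psi> g x =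
     (\<Sum>a<k. if case_nat a x \<in> X then exp (\<psi> (case_nat a x)) * g (case_nat a x) else 0)"
proof -
  have "{y \<in> X. shift y = x} = (\<lambda>a. case_nat a x) ` {a \<in> {..<k}. case_nat a x \<in> X}"
  proof (intro set_eqI iffI)
    fix y assume y: "y \<in> {y \<in> X. shift y = x}"
    then have "y = case_nat (y 0) x" and "y 0 < k"
      using case_nat_shift[of y] by (auto simp: sft_def)
    then show "y \<in> (\<lambda>a. case_nat a x) ` {a \<in> {..<k}. case_nat a x \<in> X}"
      using y by force
  qed auto
  moreover have "inj_on (\<lambda>a. case_nat a x) {a \<in> {..<k}. case_nat a x \<in> X}"
    by (rule inj_onI) (metis nat.simps(4))
  ultimately have "transfer_op X \<psi> g x =
      (\<Sum>a\<in>{a \<in> {..<k}. case_nat a x \<in> X}. exp (\<psi> (case_nat a x)) * g (case_nat a x))"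
    unfolding transfer_op_def by (simp add: sum.reindex)
  also have "\<dots> = (\<Sum>a<k. if case_nat a x \<in> X
      then exp (\<psi> (case_nat a x)) * g (case_nat a x) else 0)"
    by (rule sum.inter_filter) simp
  finally show ?thesis .
qed

lemma continuous_on_if_case_nat_in_sft:
  fixes h :: "(nat \<Rightarrow> nat) \<Rightarrow> real"
  assumes "continuous_on X h"
  shows "continuous_on X (\<lambda>x. if case_nat a x \<in> X then h (case_nat a x) else 0)"
  unfolding continuous_on_iff_cylinders
proof (intro ballI allI impI)
  fix x and e :: real assume x: "x \<in> X" and e: "e > 0"
  let ?g = "\<lambda>x. if case_nat a x \<in> X then h (case_nat a x) else 0"
  have same_membership: "case_nat a y \<in> X \<longleftrightarrow> case_nat a x \<in> X"
    if "y \<in> X" "\<forall>i<window. y i = x i" for y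
    using case_nat_in_sft_if_agree[of a x y] case_nat_in_sft_if_agree[of a y x] x that by auto
  show "\<exists>r. \<forall>y\<in>X. (\<forall>i<r. y i = x i) \<longrightarrow> \<bar>?g y - ?g x\<bar> < e"
  proof (cases "case_nat a x \<in> X")
    case True
    then obtain r where r: "\<forall>y\<in>X. (\<forall>i<r. y i = case_nat a x i) \<longrightarrow> \<bar>h y - h (case_nat a x)\<bar> < e"
      using assms e unfolding continuous_on_iff_cylinders by blast
    have "\<bar>?g y - ?g x\<bar> < e" if "y \<in> X" "\<forall>i<max r window. y i = x i" for y
    proof -
      have "\<forall>i<r. case_nat a y i = case_nat a x i"
        using that(2) by (auto split: nat.split)
      then show ?thesis using r same_membership that True by auto
    qed
    then show ?thesis by blast
  next
    case False
    then show ?thesis using same_membership e by (intro exI[of _ window]) auto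
  qed
qed

lemma continuous_on_transfer_op:
  assumes "continuous_on X \<psi>" "continuous_on X g"
  shows "continuous_on X (transfer_op X \<psi> g)"
proof -
  have "continuous_on X (\<lambda>y. exp (\<psi> y) * g y)"
    by (intro continuous_on_mult continuous_on_exp assms)
  then have "continuous_on X (\<lambda>x. \<Sum>a<k. if case_nat a x \<in> X
      then exp (\<psi> (case_nat a x)) * g (case_nat a x) else 0)"
    by (intro continuous_on_sum continuous_on_if_case_nat_in_sft)
  then show ?thesis by (simp add: transfer_op_eq_sum_letters[abs_def])
qed

definition shift_preimages :: "nat \<Rightarrow> (nat \<Rightarrow> nat) \<Rightarrow> (nat \<Rightarrow> nat) set" where
  "shift_preimages n x = {y \<in> X. (shift ^^ n) y = x}"

definition word :: "nat \<Rightarrow> (nat \<Rightarrow> nat) \<Rightarrow> nat list" where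
  "word n y = map y [0..<n]"

definition words :: "nat \<Rightarrow> nat list set" where
  "words n = word n ` X"

definition cylinder :: "nat list \<Rightarrow> (nat \<Rightarrow> nat) set" where
  "cylinder w = {y \<in> X. word (length w) y = w}"

lemma length_word [simp]: "length (word n y) = n"
  by (simp add: word_def)

lemma word_eq_iff: "word n y = word n y' \<longleftrightarrow> (\<forall>i<n. y i = y' i)"
  by (auto simp: word_def map_eq_conv)

lemma word_add: "word (n + m) y = word n y @ word m ((shift ^^ n) y)"
proof -
  have "[0..<n + m] = [0..<n] @ [n..<n + m]"
    by (rule upt_add_eq_append) simp
  moreover have "map y [n..<n + m] = map (\<lambda>i. y (i + n)) [0..<m]"
    by (rule nth_equalityI) (auto simp: add.commute)
  ultimately show ?thesis
    by (simp add: word_def funpow_shift)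
qed

lemma words_subset_lists: "words n \<subseteq> {w. set w \<subseteq> {..<k} \<and> length w = n}"
  by (auto simp: words_def word_def sft_def)

lemma finite_words: "finite (words n)"
  by (rule finite_subset[OF words_subset_lists finite_lists_length_eq]) simp

lemma cylinder_word: "cylinder (word n x) = {y \<in> X. \<forall>i<n. y i = x i}"
  by (simp add: cylinder_def word_eq_iff)

lemma in_cylinder_word: "y \<in> X \<Longrightarrow> y \<in> cylinder (word n y)"
  by (simp add: cylinder_def)

lemma inj_on_word_shift_preimages: "inj_on (word n) (shift_preimages n x)"
proof (rule inj_onI)
  fix y y' assume y: "y \<in> shift_preimages n x" "y' \<in> shift_preimages n x" "word n y = word n y'"
  show "y = y'"
  proof
    fix i
    show "y i = y' i"
    proof (cases "i < n")
      case True
      then show ?thesis using y(3) word_eq_iff by blast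
    next
      case False
      have "(shift ^^ n) y (i - n) = (shift ^^ n) y' (i - n)"
        using y(1,2) by (simp add: shift_preimages_def)
      then show ?thesis using False by (simp add: funpow_shift)
    qed
  qed
qed

lemma finite_shift_preimages: "finite (shift_preimages n x)"
proof (rule finite_imageD[OF _ inj_on_word_shift_preimages])
  show "finite (word n ` shift_preimages n x)"
    by (rule finite_subset[OF _ finite_words]) (auto simp: shift_preimages_def words_def)
qed

lemma common_tail_extension:
  assumes "window \<le> n" "y0 \<in> X"
  obtains glue where "\<forall>w\<in>words n. drop (n - window) w = drop (n - window) (word n y0) \<longrightarrow>
    word n (glue w) = w \<and> glue w \<in> shift_preimages n ((shift ^^ n) y0)"
proof -
  have "\<forall>w\<in>words n. \<exists>y\<in>X. word n y = w"
    by (auto simp: words_def)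
  then obtain rep where rep: "\<And>w. w \<in> words n \<Longrightarrow> rep w \<in> X \<and> word n (rep w) = w"
    by metis
  define glue where "glue w = (\<lambda>i. if i < n then rep w i else y0 i)" for w
  have "word n (glue w) = w \<and> glue w \<in> shift_preimages n ((shift ^^ n) y0)"
    if w: "w \<in> words n" and suffix: "drop (n - window) w = drop (n - window) (word n y0)" for w
  proof
    show "word n (glue w) = w"
      using rep[OF w] by (metis glue_def word_eq_iff)
    have "rep w i = y0 i" if "n - window \<le> i" "i < n" for i
    proof -
      have "drop (n - window) (word n (rep w)) ! (i - (n - window))
          = drop (n - window) (word n y0) ! (i - (n - window))"
        using rep[OF w] suffix by auto
      then show ?thesis using that by (simp add: word_def)
    qed
    then have "glue w \<in> X"
      unfolding glue_def using rep[OF w] assms by (intro glue_in_sft) auto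
    then show "glue w \<in> shift_preimages n ((shift ^^ n) y0)"
      by (simp add: shift_preimages_def funpow_shift glue_def)
  qed
  then show ?thesis using that by blast
qed

definition transfer_power ::
    "nat \<Rightarrow> ((nat \<Rightarrow> nat) \<Rightarrow> real) \<Rightarrow> ((nat \<Rightarrow> nat) \<Rightarrow> real) \<Rightarrow> (nat \<Rightarrow> nat) \<Rightarrow> real" where
  "transfer_power n \<psi> g x = (\<Sum>y\<in>shift_preimages n x. exp (birkhoff_sum n \<psi> y) * g y)"

lemma transfer_power_0:
  assumes "x \<in> X"
  shows "transfer_power 0 \<psi> g x = g x"
proof -
  have "shift_preimages 0 x = {x}"
    using assms by (auto simp: shift_preimages_def)
  then show ?thesis by (simp add: transfer_power_def)
qed

lemma transfer_power_Suc: "transfer_power (Suc n) \<psi> g x = transfer_power n \<psi> (transfer_op X \<psi> g) x"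
proof -
  have "shift ` shift_preimages (Suc n) x \<subseteq> shift_preimages n x"
    by (auto simp: shift_preimages_def shift_in_sft funpow_swap1)
  then have "transfer_power (Suc n) \<psi> g x = (\<Sum>z\<in>shift_preimages n x.
      \<Sum>y\<in>{y \<in> shift_preimages (Suc n) x. shift y = z}. exp (birkhoff_sum (Suc n) \<psi> y) * g y)"
    unfolding transfer_power_def by (intro sum.group[symmetric] finite_shift_preimages)
  also have "\<dots> = (\<Sum>z\<in>shift_preimages n x. exp (birkhoff_sum n \<psi> z) * transfer_op X \<psi> g z)"
  proof (rule sum.cong[OF refl])
    fix z assume "z \<in> shift_preimages n x"
    then have "{y \<in> shift_preimages (Suc n) x. shift y = z} = {y \<in> X. shift y = z}"
      by (auto simp: shift_preimages_def funpow_swap1)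
    then show "(\<Sum>y\<in>{y \<in> shift_preimages (Suc n) x. shift y = z}.
        exp (birkhoff_sum (Suc n) \<psi> y) * g y) = exp (birkhoff_sum n \<psi> z) * transfer_op X \<psi> g z"
      unfolding transfer_op_def sum_distrib_left
      by (intro sum.cong) (auto simp: birkhoff_sum_Suc exp_add)
  qed
  finally show ?thesis by (simp add: transfer_power_def)
qed

lemma continuous_on_transfer_power:
  assumes "continuous_on X \<psi>" "continuous_on X g"
  shows "continuous_on X (transfer_power n \<psi> g)"
  using assms(2)
proof (induction n arbitrary: g)
  case 0
  then show ?case by (rule continuous_on_eq) (simp add: transfer_power_0)
next
  case (Suc n)
  then show ?case
    by (simp add: transfer_power_Suc[abs_def] continuous_on_transfer_op[OF assms(1)])
qed

section \<open>Partition sums and pressure\<close>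

text \<open>The sum Z_n(f) inside pressure, indexed by words of length n instead of n-cylinders.\<close>
definition partition_sum :: "nat \<Rightarrow> ((nat \<Rightarrow> nat) \<Rightarrow> real) \<Rightarrow> real" where
  "partition_sum n f = (\<Sum>w\<in>words n. exp (SUP y\<in>cylinder w. birkhoff_sum n f y))"

lemma pressure_eq_lim_partition_sum:
  "pressure X f = lim (\<lambda>n. ln (partition_sum n f) / real n)"
proof -
  have "cylinders X n = (\<lambda>x. cylinder (word n x)) ` X" for n
    by (auto simp: cylinders_def cylinder_word)
  then have "cylinders X n = cylinder ` words n" for n
    by (simp add: words_def image_image)
  moreover have "inj_on cylinder (words n)" for n
  proof (rule inj_onI)
    fix w w' assume w: "w \<in> words n" "w' \<in> words n" "cylinder w = cylinder w'"
    then obtain x where x: "x \<in> X" "w = word n x"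
      by (auto simp: words_def)
    then have "x \<in> cylinder w'"
      using w(3) in_cylinder_word by blast
    moreover have "length w' = n"
      using w(2) by (auto simp: words_def)
    ultimately show "w = w'" using x(2) by (simp add: cylinder_def)
  qed
  ultimately have "(\<Sum>C\<in>cylinders X n. exp (SUP x\<in>C. birkhoff_sum n f x)) = partition_sum n f" for n
    unfolding partition_sum_def by (simp add: sum.reindex)
  then show ?thesis by (simp add: pressure_def)
qed

lemma partition_sum_pos: "X \<noteq> {} \<Longrightarrow> partition_sum n f > 0"
  unfolding partition_sum_def using finite_words by (intro sum_pos) (auto simp: words_def)

lemma birkhoff_sum_le_cylinder_sup:
  assumes "continuous_on X f" "y \<in> X"
  shows "birkhoff_sum n f y \<le> (SUP y'\<in>cylinder (word n y). birkhoff_sum n f y')"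
proof (rule cSUP_upper)
  obtain B where "\<And>x. x \<in> X \<Longrightarrow> \<bar>f x\<bar> \<le> B"
    using continuous_on_sft_bounded[OF assms(1)] by blast
  then have "birkhoff_sum n f y' \<le> real n * B" if "y' \<in> X" for y'
    using birkhoff_sum_bounded that abs_le_D1 by blast
  then show "bdd_above (birkhoff_sum n f ` cylinder (word n y))"
    by (intro bdd_aboveI2[of _ _ "real n * B"]) (auto simp: cylinder_def)
qed (use assms in \<open>simp add: in_cylinder_word\<close>)

lemma cylinder_sup_le:
  assumes "w \<in> words n" "\<And>y. y \<in> cylinder w \<Longrightarrow> birkhoff_sum n f y \<le> c"
  shows "(SUP y\<in>cylinder w. birkhoff_sum n f y) \<le> c"
  using assms by (intro cSUP_least) (auto simp: words_def cylinder_def)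

lemma cylinder_sup_le_distortion:
  assumes R: "\<And>y y'. y \<in> X \<Longrightarrow> y' \<in> X \<Longrightarrow> \<forall>i<R. y i = y' i \<Longrightarrow> \<bar>f y - f y'\<bar> < \<eta>"
    and B: "\<And>x. x \<in> X \<Longrightarrow> \<bar>f x\<bar> \<le> B" and w: "w \<in> words n" and z: "z \<in> cylinder w"
  shows "(SUP y\<in>cylinder w. birkhoff_sum n f y) \<le> birkhoff_sum n f z + real n * \<eta> + 2 * B * real R"
proof (rule cylinder_sup_le[OF w])
  fix y assume y: "y \<in> cylinder w"
  have "length w = n"
    using w by (auto simp: words_def)
  then have "word n y = word n z"
    using y z by (simp add: cylinder_def)
  then have "\<forall>i<n. y i = z i"
    using word_eq_iff by blast
  moreover have "y \<in> X" "z \<in> X"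
    using y z by (auto simp: cylinder_def)
  ultimately show "birkhoff_sum n f y \<le> birkhoff_sum n f z + real n * \<eta> + 2 * B * real R"
    using R B by (intro birkhoff_sum_distortion)
qed

lemma preimage_sum_le_partition_sum:
  assumes "continuous_on X f"
  shows "(\<Sum>y\<in>shift_preimages n x. exp (birkhoff_sum n f y)) \<le> partition_sum n f"
proof -
  have "(\<Sum>y\<in>shift_preimages n x. exp (birkhoff_sum n f y))
      \<le> (\<Sum>y\<in>shift_preimages n x. exp (SUP y'\<in>cylinder (word n y). birkhoff_sum n f y'))"
    by (intro sum_mono exp_mono birkhoff_sum_le_cylinder_sup assms) (simp add: shift_preimages_def)
  also have "\<dots> = (\<Sum>w\<in>word n ` shift_preimages n x. exp (SUP y\<in>cylinder w. birkhoff_sum n f y))"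
    by (simp add: sum.reindex[OF inj_on_word_shift_preimages])
  also have "\<dots> \<le> partition_sum n f"
    unfolding partition_sum_def
    by (intro sum_mono2 finite_words) (auto simp: words_def shift_preimages_def)
  finally show ?thesis .
qed

lemma partition_sum_submultiplicative:
  assumes "continuous_on X f"
  shows "partition_sum (n + m) f \<le> partition_sum n f * partition_sum m f"
proof -
  let ?Z = "\<lambda>n w. exp (SUP y\<in>cylinder w. birkhoff_sum n f y)"
  let ?split = "\<lambda>w. (take n w, drop n w)"
  have split_words: "?split w \<in> words n \<times> words m" if "w \<in> words (n + m)" for w
    using that shift_iterate_in_sft by (auto simp: words_def word_add)
  have "partition_sum (n + m) f \<le> (\<Sum>w\<in>words (n + m). ?Z n (take n w) * ?Z m (drop n w))"
    unfolding partition_sum_def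
  proof (intro sum_mono)
    fix w assume w: "w \<in> words (n + m)"
    have "(SUP y\<in>cylinder w. birkhoff_sum (n + m) f y)
        \<le> (SUP y\<in>cylinder (take n w). birkhoff_sum n f y)
          + (SUP y\<in>cylinder (drop n w). birkhoff_sum m f y)"
    proof (rule cylinder_sup_le[OF w])
      fix y assume y: "y \<in> cylinder w"
      then have "y \<in> X" and "take n w = word n y" and "drop n w = word m ((shift ^^ n) y)"
        using w by (auto simp: cylinder_def words_def word_add)
      then show "birkhoff_sum (n + m) f y
          \<le> (SUP y\<in>cylinder (take n w). birkhoff_sum n f y)
            + (SUP y\<in>cylinder (drop n w). birkhoff_sum m f y)"
        unfolding birkhoff_sum_add
        by (metis add_mono assms birkhoff_sum_le_cylinder_sup shift_iterate_in_sft)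
    qed
    then show "?Z (n + m) w \<le> ?Z n (take n w) * ?Z m (drop n w)"
      by (simp flip: exp_add)
  qed
  also have "\<dots> = (\<Sum>p\<in>?split ` words (n + m). ?Z n (fst p) * ?Z m (snd p))"
  proof -
    have "inj_on ?split (words (n + m))"
      by (rule inj_onI) (metis append_take_drop_id prod.inject)
    then show ?thesis by (simp add: sum.reindex)
  qed
  also have "\<dots> \<le> (\<Sum>p\<in>words n \<times> words m. ?Z n (fst p) * ?Z m (snd p))"
    using split_words by (intro sum_mono2) (auto simp: finite_words)
  also have "\<dots> = partition_sum n f * partition_sum m f"
    by (simp add: partition_sum_def sum_product sum.cartesian_product case_prod_beta)
  finally show ?thesis .
qed

lemma ln_partition_sum_lower:
  assumes "X \<noteq> {}" "\<And>x. x \<in> X \<Longrightarrow> \<bar>f x\<bar> \<le> B" "continuous_on X f"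
  shows "real n * - B \<le> ln (partition_sum n f)"
proof -
  obtain x where x: "x \<in> X" using assms(1) by blast
  have "\<bar>birkhoff_sum n f x\<bar> \<le> real n * B"
    using assms(2) x by (rule birkhoff_sum_bounded)
  then have "- (real n * B) \<le> birkhoff_sum n f x"
    by linarith
  also have "\<dots> \<le> (SUP y\<in>cylinder (word n x). birkhoff_sum n f y)"
    by (rule birkhoff_sum_le_cylinder_sup[OF assms(3) x])
  finally have "exp (- (real n * B)) \<le> exp (SUP y\<in>cylinder (word n x). birkhoff_sum n f y)"
    by simp
  also have "\<dots> \<le> partition_sum n f"
    unfolding partition_sum_def using x finite_words
    by (intro member_le_sum) (auto simp: words_def)
  finally show ?thesis
    using partition_sum_pos[OF assms(1)] by (simp add: ln_ge_iff)
qed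

lemma partition_sum_tendsto_pressure:
  assumes "X \<noteq> {}" "continuous_on X f"
  shows "(\<lambda>n. ln (partition_sum n f) / real n) \<longlonglongrightarrow> pressure X f"
proof -
  obtain B where B: "\<And>x. x \<in> X \<Longrightarrow> \<bar>f x\<bar> \<le> B"
    using continuous_on_sft_bounded[OF assms(2)] by blast
  have "convergent (\<lambda>n. ln (partition_sum n f) / real n)"
  proof (rule subadditive_convergent)
    fix m n
    have "ln (partition_sum (m + n) f) \<le> ln (partition_sum m f * partition_sum n f)"
      using partition_sum_submultiplicative[OF assms(2), of m n] partition_sum_pos[OF assms(1)]
      by simp
    then show "ln (partition_sum (m + n) f) \<le> ln (partition_sum m f) + ln (partition_sum n f)"
      using partition_sum_pos[OF assms(1), of m f] partition_sum_pos[OF assms(1), of n f]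
      by (simp add: ln_mult)
  qed (rule ln_partition_sum_lower[OF assms(1) B assms(2)])
  then show ?thesis
    by (simp add: pressure_eq_lim_partition_sum convergent_LIMSEQ_iff)
qed

lemma partition_sum_eventually_le:
  assumes "X \<noteq> {}" "continuous_on X f" "pressure X f < c"
  shows "eventually (\<lambda>n. partition_sum n f \<le> exp (real n * c)) sequentially"
  using order_tendstoD(2)[OF partition_sum_tendsto_pressure[OF assms(1,2)] assms(3)]
    eventually_gt_at_top[of 0]
proof eventually_elim
  case (elim n)
  then have "ln (partition_sum n f) \<le> real n * c"
    by (simp add: field_simps)
  then show ?case
    using partition_sum_pos[OF assms(1)] by (metis exp_le_cancel_iff exp_ln)
qed

end

section \<open>Normalised potentials\<close>

locale normalised_potential = finite_type_shift +
  fixes \<psi> :: "(nat \<Rightarrow> nat) \<Rightarrow> real"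
  assumes continuous_potential: "continuous_on X \<psi>"
    and normalised: "\<And>x. x \<in> X \<Longrightarrow> transfer_op X \<psi> (\<lambda>_. 1) x = 1"
begin

lemma transfer_power_cong:
  "(\<And>y. y \<in> X \<Longrightarrow> g y = h y) \<Longrightarrow> transfer_power n \<psi> g x = transfer_power n \<psi> h x"
  unfolding transfer_power_def by (intro sum.cong) (auto simp: shift_preimages_def)

lemma transfer_power_one: "x \<in> X \<Longrightarrow> transfer_power n \<psi> (\<lambda>_. 1) x = 1"
proof (induction n arbitrary: x)
  case (Suc n)
  have "transfer_power (Suc n) \<psi> (\<lambda>_. 1) x = transfer_power n \<psi> (\<lambda>_. 1) x"
    unfolding transfer_power_Suc by (rule transfer_power_cong) (simp add: normalised)
  then show ?case using Suc by simp
qed (simp add: transfer_power_0)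

text \<open>
  All words with a common suffix of length window extend, by one common tail, to distinct
  n-fold preimages of a single point, whose weights add up to L^n 1 = 1.
\<close>
lemma fiber_partition_sum_le:
  assumes R: "\<And>y y'. y \<in> X \<Longrightarrow> y' \<in> X \<Longrightarrow> \<forall>i<R. y i = y' i \<Longrightarrow> \<bar>\<psi> y - \<psi> y'\<bar> < \<eta>"
    and B: "\<And>x. x \<in> X \<Longrightarrow> \<bar>\<psi> x\<bar> \<le> B" and n: "window \<le> n"
  shows "(\<Sum>w\<in>{w\<in>words n. drop (n - window) w = u}. exp (SUP y\<in>cylinder w. birkhoff_sum n \<psi> y))
           \<le> exp (real n * \<eta> + 2 * B * real R)"
proof (cases "{w\<in>words n. drop (n - window) w = u} = {}")
  case False
  let ?fiber = "{w\<in>words n. drop (n - window) w = u}"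
  let ?D = "real n * \<eta> + 2 * B * real R"
  obtain y0 where y0: "y0 \<in> X" "drop (n - window) (word n y0) = u"
    using False by (auto simp: words_def)
  obtain glue where glue: "\<forall>w\<in>words n. drop (n - window) w = drop (n - window) (word n y0) \<longrightarrow>
      word n (glue w) = w \<and> glue w \<in> shift_preimages n ((shift ^^ n) y0)"
    using common_tail_extension[OF n y0(1)] by blast
  have glue_word: "word n (glue w) = w"
    and glue_preimage: "glue w \<in> shift_preimages n ((shift ^^ n) y0)" if "w \<in> ?fiber" for w
    using glue that y0(2) by simp_all
  have "(\<Sum>w\<in>?fiber. exp (SUP y\<in>cylinder w. birkhoff_sum n \<psi> y))
      \<le> (\<Sum>w\<in>?fiber. exp ?D * exp (birkhoff_sum n \<psi> (glue w)))"
  proof (rule sum_mono)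
    fix w assume w: "w \<in> ?fiber"
    have "glue w \<in> cylinder w"
      using glue_word[OF w] glue_preimage[OF w] w
      by (auto simp: cylinder_def shift_preimages_def words_def)
    moreover have "w \<in> words n"
      using w by simp
    ultimately have "(SUP y\<in>cylinder w. birkhoff_sum n \<psi> y)
        \<le> birkhoff_sum n \<psi> (glue w) + real n * \<eta> + 2 * B * real R"
      using R B by (intro cylinder_sup_le_distortion)
    then have "(SUP y\<in>cylinder w. birkhoff_sum n \<psi> y) \<le> birkhoff_sum n \<psi> (glue w) + ?D"
      by linarith
    then show "exp (SUP y\<in>cylinder w. birkhoff_sum n \<psi> y)
        \<le> exp ?D * exp (birkhoff_sum n \<psi> (glue w))"
      by (simp flip: exp_add add: add.commute)
  qed
  also have "\<dots> = exp ?D * (\<Sum>z\<in>glue ` ?fiber. exp (birkhoff_sum n \<psi> z))"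
  proof -
    have "inj_on glue ?fiber"
      by (rule inj_onI) (metis glue_word)
    then show ?thesis by (simp add: sum.reindex sum_distrib_left)
  qed
  also have "\<dots> \<le> exp ?D * (\<Sum>z\<in>shift_preimages n ((shift ^^ n) y0). exp (birkhoff_sum n \<psi> z))"
    using glue_preimage by (intro mult_left_mono sum_mono2 finite_shift_preimages) auto
  also have "(\<Sum>z\<in>shift_preimages n ((shift ^^ n) y0). exp (birkhoff_sum n \<psi> z)) = 1"
    using transfer_power_one[OF shift_iterate_in_sft[OF y0(1)], of n n]
    by (simp add: transfer_power_def)
  finally show ?thesis by simp
next
  case True
  then show ?thesis by (simp only: True sum.empty) simp
qed

lemma partition_sum_normalised_le:
  assumes R: "\<And>y y'. y \<in> X \<Longrightarrow> y' \<in> X \<Longrightarrow> \<forall>i<R. y i = y' i \<Longrightarrow> \<bar>\<psi> y - \<psi> y'\<bar> < \<eta>"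
    and B: "\<And>x. x \<in> X \<Longrightarrow> \<bar>\<psi> x\<bar> \<le> B" and n: "window \<le> n"
  shows "partition_sum n \<psi> \<le> real k ^ window * exp (real n * \<eta> + 2 * B * real R)"
proof -
  let ?tails = "{u. set u \<subseteq> {..<k} \<and> length u = window}"
  have "drop (n - window) ` words n \<subseteq> ?tails"
    using words_subset_lists n by (fastforce dest: in_set_dropD)
  then have "partition_sum n \<psi> = (\<Sum>u\<in>?tails.
      \<Sum>w\<in>{w\<in>words n. drop (n - window) w = u}. exp (SUP y\<in>cylinder w. birkhoff_sum n \<psi> y))"
    unfolding partition_sum_def
    by (intro sum.group[symmetric] finite_words finite_lists_length_eq) simp
  also have "\<dots> \<le> (\<Sum>u\<in>?tails. exp (real n * \<eta> + 2 * B * real R))"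
    by (intro sum_mono fiber_partition_sum_le[OF R B n])
  also have "\<dots> = real k ^ window * exp (real n * \<eta> + 2 * B * real R)"
    by (simp add: card_lists_length_eq)
  finally show ?thesis .
qed

lemma pressure_normalised_le_0:
  assumes "X \<noteq> {}"
  shows "pressure X \<psi> \<le> 0"
proof (rule field_le_epsilon)
  fix \<eta> :: real assume "0 < \<eta>"
  obtain R where R: "\<And>y y'. y \<in> X \<Longrightarrow> y' \<in> X \<Longrightarrow> \<forall>i<R. y i = y' i \<Longrightarrow> \<bar>\<psi> y - \<psi> y'\<bar> < \<eta>"
    using compact_uniformly_continuous_on_cylinders[OF compact_sft continuous_potential \<open>0 < \<eta>\<close>]
    by blast
  obtain B where B: "\<And>x. x \<in> X \<Longrightarrow> \<bar>\<psi> x\<bar> \<le> B"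
    using continuous_on_sft_bounded[OF continuous_potential] by blast
  obtain x where "x \<in> X"
    using assms by blast
  then have "x 0 < k"
    unfolding sft_def by blast
  then have "0 < k" by simp
  define C where "C = real window * ln (real k) + 2 * B * real R"
  have bound: "ln (partition_sum n \<psi>) / real n \<le> \<eta> + C / real n" if "max window 1 \<le> n" for n
  proof -
    from R B have "partition_sum n \<psi> \<le> real k ^ window * exp (real n * \<eta> + 2 * B * real R)"
      using that by (intro partition_sum_normalised_le) auto
    then have "ln (partition_sum n \<psi>) \<le> ln (real k ^ window * exp (real n * \<eta> + 2 * B * real R))"
      using partition_sum_pos[OF assms, of n \<psi>] by (intro ln_mono) auto
    also have "\<dots> = real n * \<eta> + C"
      using \<open>0 < k\<close> by (simp add: C_def ln_mult ln_realpow)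
    finally show ?thesis using that by (simp add: field_simps)
  qed
  have "(\<lambda>n. \<eta> + C / real n) \<longlonglongrightarrow> \<eta> + 0"
    by (intro tendsto_intros lim_const_over_n)
  moreover have "eventually (\<lambda>n. ln (partition_sum n \<psi>) / real n \<le> \<eta> + C / real n) sequentially"
    using eventually_ge_at_top[of "max window 1"] by eventually_elim (rule bound)
  ultimately have "pressure X \<psi> \<le> \<eta> + 0"
    using partition_sum_tendsto_pressure[OF assms continuous_potential]
    by (intro tendsto_le[OF sequentially_bot])
  then show "pressure X \<psi> \<le> 0 + \<eta>" by simp
qed

end

section \<open>g-measures and large deviations\<close>

locale g_measure_system = normalised_potential +
  fixes \<mu> :: "(nat \<Rightarrow> nat) measure"
  assumes g_measure: "g_measure X \<psi> \<mu>"
begin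

lemma prob_space: "prob_space \<mu>"
  using g_measure by (simp add: g_measure_def)

lemma sets_g_measure: "sets \<mu> = sets (restrict_space borel X)"
  using g_measure by (simp add: g_measure_def)

lemma space_g_measure: "space \<mu> = X"
  using sets_eq_imp_space_eq[OF sets_g_measure] by (simp add: space_restrict_space)

lemma sft_nonempty: "X \<noteq> {}"
  using prob_space.not_empty[OF prob_space] by (simp add: space_g_measure)

lemma integrable_continuous:
  fixes g :: "(nat \<Rightarrow> nat) \<Rightarrow> real"
  assumes "continuous_on X g"
  shows "integrable \<mu> g"
proof -
  obtain B where B: "\<And>x. x \<in> X \<Longrightarrow> \<bar>g x\<bar> \<le> B"
    using continuous_on_sft_bounded[OF assms] by blast
  have "g \<in> borel_measurable \<mu>"
    using borel_measurable_continuous_on_restrict[OF assms]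
      measurable_cong_sets[OF sets_g_measure refl] by blast
  moreover have "finite_measure \<mu>"
    using prob_space unfolding prob_space_def by blast
  ultimately show ?thesis
    using B by (intro finite_measure.integrable_const_bound[where B = B])
      (auto simp: space_g_measure)
qed

lemma integral_transfer_power:
  fixes g :: "(nat \<Rightarrow> nat) \<Rightarrow> real"
  assumes "continuous_on X g"
  shows "(\<integral>x. transfer_power n \<psi> g x \<partial>\<mu>) = (\<integral>x. g x \<partial>\<mu>)"
  using assms
proof (induction n arbitrary: g)
  case 0
  then show ?case
    by (intro Bochner_Integration.integral_cong) (auto simp: space_g_measure transfer_power_0)
next
  case (Suc n)
  have "(\<integral>x. transfer_power n \<psi> (transfer_op X \<psi> g) x \<partial>\<mu>) = (\<integral>x. transfer_op X \<psi> g x \<partial>\<mu>)"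
    by (rule Suc.IH[OF continuous_on_transfer_op[OF continuous_potential Suc.prems]])
  also have "\<dots> = (\<integral>x. g x \<partial>\<mu>)"
    using g_measure Suc.prems by (simp add: g_measure_def)
  finally show ?case by (simp add: transfer_power_Suc[abs_def])
qed

text \<open>The n-th transfer power maps g \<circ> shift^n to g \<cdot> L^n 1 = g.\<close>
lemma integral_shift_iterate:
  fixes g :: "(nat \<Rightarrow> nat) \<Rightarrow> real"
  assumes "continuous_on X g"
  shows "(\<integral>x. g ((shift ^^ n) x) \<partial>\<mu>) = (\<integral>x. g x \<partial>\<mu>)"
proof -
  have "transfer_power n \<psi> (\<lambda>x. g ((shift ^^ n) x)) x = g x" if "x \<in> X" for x
  proof -
    have "transfer_power n \<psi> (\<lambda>x. g ((shift ^^ n) x)) x = g x * transfer_power n \<psi> (\<lambda>_. 1) x"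
      unfolding transfer_power_def sum_distrib_left
      by (intro sum.cong) (auto simp: shift_preimages_def)
    then show ?thesis using transfer_power_one[OF that] by simp
  qed
  then have "(\<integral>x. transfer_power n \<psi> (\<lambda>x. g ((shift ^^ n) x)) x \<partial>\<mu>) = (\<integral>x. g x \<partial>\<mu>)"
    by (intro Bochner_Integration.integral_cong) (auto simp: space_g_measure)
  then show ?thesis
    using integral_transfer_power[OF continuous_on_shift_iterate_comp[OF assms]] by simp
qed

lemma integral_birkhoff_sum:
  assumes "continuous_on X \<phi>"
  shows "(\<integral>x. birkhoff_sum n \<phi> x \<partial>\<mu>) = real n * (\<integral>x. \<phi> x \<partial>\<mu>)"
proof -
  have "(\<integral>x. birkhoff_sum n \<phi> x \<partial>\<mu>) = (\<Sum>i<n. \<integral>x. \<phi> ((shift ^^ i) x) \<partial>\<mu>)"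
    unfolding birkhoff_sum_def
    by (intro Bochner_Integration.integral_sum integrable_continuous
        continuous_on_shift_iterate_comp assms)
  then show ?thesis by (simp add: integral_shift_iterate[OF assms])
qed

lemma exponential_moment_le_partition_sum:
  assumes "continuous_on X \<phi>"
  shows "(\<integral>x. exp (s * birkhoff_sum n \<phi> x) \<partial>\<mu>) \<le> partition_sum n (\<lambda>x. s * \<phi> x + \<psi> x)"
proof -
  let ?g = "\<lambda>x. exp (s * birkhoff_sum n \<phi> x)"
  have continuous_g: "continuous_on X ?g"
    by (intro continuous_on_exp continuous_on_mult continuous_on_const
        continuous_on_birkhoff_sum assms)
  have "transfer_power n \<psi> ?g x \<le> partition_sum n (\<lambda>x. s * \<phi> x + \<psi> x)" for x
  proof -
    have "transfer_power n \<psi> ?g x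
        = (\<Sum>y\<in>shift_preimages n x. exp (birkhoff_sum n (\<lambda>x. s * \<phi> x + \<psi> x) y))"
      unfolding transfer_power_def birkhoff_sum_affine by (simp add: exp_add mult.commute)
    also have "\<dots> \<le> partition_sum n (\<lambda>x. s * \<phi> x + \<psi> x)"
      by (intro preimage_sum_le_partition_sum continuous_on_add continuous_on_mult
          continuous_on_const assms continuous_potential)
    finally show ?thesis .
  qed
  then have "(\<integral>x. transfer_power n \<psi> ?g x \<partial>\<mu>) \<le> (\<integral>x. partition_sum n (\<lambda>x. s * \<phi> x + \<psi> x) \<partial>\<mu>)"
    by (intro integral_mono integrable_continuous continuous_on_transfer_power
        continuous_potential continuous_g continuous_on_const)
  then show ?thesis
    using integral_transfer_power[OF continuous_g] prob_space.prob_space[OF prob_space] by simp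
qed

lemma mean_le_pressure:
  assumes "continuous_on X \<phi>"
  shows "s * (\<integral>x. \<phi> x \<partial>\<mu>) \<le> pressure X (\<lambda>x. s * \<phi> x + \<psi> x)"
proof (rule LIMSEQ_le_const[OF partition_sum_tendsto_pressure[OF sft_nonempty]])
  show "continuous_on X (\<lambda>x. s * \<phi> x + \<psi> x)"
    by (intro continuous_on_add continuous_on_mult continuous_on_const assms continuous_potential)
  have "s * (\<integral>x. \<phi> x \<partial>\<mu>) \<le> ln (partition_sum n (\<lambda>x. s * \<phi> x + \<psi> x)) / real n"
    if "n \<ge> 1" for n
  proof -
    have integrable: "integrable \<mu> (\<lambda>x. s * birkhoff_sum n \<phi> x)"
      by (intro integrable_continuous continuous_on_mult continuous_on_const
          continuous_on_birkhoff_sum assms)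
    have "exp (s * real n * (\<integral>x. \<phi> x \<partial>\<mu>)) = exp (\<integral>x. s * birkhoff_sum n \<phi> x \<partial>\<mu>)"
      by (simp add: integral_birkhoff_sum[OF assms])
    also have "\<dots> \<le> (\<integral>x. exp (s * birkhoff_sum n \<phi> x) \<partial>\<mu>)"
    proof (rule prob_space.jensens_inequality[OF prob_space integrable, where I = UNIV])
      show "integrable \<mu> (\<lambda>x. exp (s * birkhoff_sum n \<phi> x))"
        by (intro integrable_continuous continuous_on_exp continuous_on_mult continuous_on_const
            continuous_on_birkhoff_sum assms)
    qed (auto intro: exp_convex)
    also have "\<dots> \<le> partition_sum n (\<lambda>x. s * \<phi> x + \<psi> x)"
      by (rule exponential_moment_le_partition_sum[OF assms])
    finally show ?thesis
      using that partition_sum_pos[OF sft_nonempty] by (simp add: ln_ge_iff field_simps)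
  qed
  then show "\<exists>N. \<forall>n\<ge>N. s * (\<integral>x. \<phi> x \<partial>\<mu>) \<le> ln (partition_sum n (\<lambda>x. s * \<phi> x + \<psi> x)) / real n"
    by blast
qed

lemma pressure_potential_eq_0: "pressure X \<psi> = 0"
  using pressure_normalised_le_0[OF sft_nonempty] mean_le_pressure[of "\<lambda>_. 0" 0] by simp

lemma deviation_eventually_le:
  assumes \<phi>: "continuous_on X \<phi>" and "0 < t" "0 < \<epsilon>"
    and upper: "pressure X (\<lambda>x. t * \<phi> x + \<psi> x) < t * ((\<integral>x. \<phi> x \<partial>\<mu>) + \<epsilon> / 2)"
    and lower: "pressure X (\<lambda>x. (- t) * \<phi> x + \<psi> x) < - t * ((\<integral>x. \<phi> x \<partial>\<mu>) - \<epsilon> / 2)"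
  shows "eventually (\<lambda>n. measure \<mu> {x\<in>X. \<epsilon> \<le> \<bar>birkhoff_sum n \<phi> x / real n - (\<integral>y. \<phi> y \<partial>\<mu>)\<bar>}
    \<le> exp (- real n * (t * \<epsilon> / 4))) sequentially"
proof -
  define m where "m = (\<integral>x. \<phi> x \<partial>\<mu>)"
  have continuous_affine: "continuous_on X (\<lambda>x. s * \<phi> x + \<psi> x)" for s
    by (intro continuous_on_add continuous_on_mult continuous_on_const \<phi> continuous_potential)
  have integrable_exp: "integrable \<mu> (\<lambda>x. exp (s * birkhoff_sum n \<phi> x))" for s n
    by (intro integrable_continuous continuous_on_exp continuous_on_mult continuous_on_const
        continuous_on_birkhoff_sum \<phi>)
  have "birkhoff_sum n \<phi> \<in> borel_measurable \<mu>" for n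
    by (rule borel_measurable_integrable integrable_continuous continuous_on_birkhoff_sum \<phi>)+
  note deviation = prob_space.deviation_le_exponential_moments[OF prob_space this \<open>0 < t\<close> _
      integrable_exp integrable_exp]
  have rate_pos: "0 < t * \<epsilon> / 4"
    using \<open>0 < t\<close> \<open>0 < \<epsilon>\<close> by simp
  show ?thesis
    using partition_sum_eventually_le[OF sft_nonempty continuous_affine upper]
      partition_sum_eventually_le[OF sft_nonempty continuous_affine lower]
      eventually_twice_exp_le[OF rate_pos] eventually_gt_at_top[of 0]
  proof eventually_elim
    case (elim n)
    have "0 < real n" using elim(4) by simp
    have "measure \<mu> {x\<in>X. \<epsilon> \<le> \<bar>birkhoff_sum n \<phi> x / real n - m\<bar>}
        \<le> exp (- t * (real n * (m + \<epsilon>))) * (\<integral>x. exp (t * birkhoff_sum n \<phi> x) \<partial>\<mu>)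
          + exp (t * (real n * (m - \<epsilon>))) * (\<integral>x. exp (- t * birkhoff_sum n \<phi> x) \<partial>\<mu>)"
      using deviation[OF \<open>0 < real n\<close>] by (simp add: space_g_measure)
    also have "\<dots> \<le> exp (- t * (real n * (m + \<epsilon>))) * exp (real n * (t * (m + \<epsilon> / 2)))
          + exp (t * (real n * (m - \<epsilon>))) * exp (real n * (- t * (m - \<epsilon> / 2)))"
      using exponential_moment_le_partition_sum[OF \<phi>, of t n]
        exponential_moment_le_partition_sum[OF \<phi>, of "- t" n] elim(1,2)
      by (intro add_mono mult_left_mono) (auto simp: m_def)
    also have "\<dots> = 2 * exp (- real n * (2 * (t * \<epsilon> / 4)))"
      by (simp flip: exp_add add: algebra_simps)
    also have "\<dots> \<le> exp (- real n * (t * \<epsilon> / 4))"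
      by (rule elim(3))
    finally show ?case by (simp add: m_def)
  qed
qed

end

theorem proposition5p6:
  fixes k :: nat and F :: "nat list set" and \<phi> \<psi> :: "(nat \<Rightarrow> nat) \<Rightarrow> real"
    and \<mu> :: "(nat \<Rightarrow> nat) measure"
  assumes "finite F"
    and "continuous_on (sft k F) \<phi>" and "continuous_on (sft k F) \<psi>"
    and "\<forall>x\<in>sft k F. transfer_op (sft k F) \<psi> (\<lambda>_. 1) x = 1"
    and "g_measure (sft k F) \<psi> \<mu>"
    and "(\<lambda>t. pressure (sft k F) (\<lambda>x. t * \<phi> x + \<psi> x)) differentiable (at (0::real))"
  shows "\<forall>\<epsilon>>0. \<exists>\<delta>>0. eventually (\<lambda>n. measure \<mu>
           {x\<in>sft k F. \<bar>birkhoff_sum n \<phi> x / real n - (\<integral>y. \<phi> y \<partial>\<mu>)\<bar> \<ge> \<epsilon>}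
           \<le> exp (- real n * \<delta>)) sequentially"
proof (intro allI impI)
  interpret g_measure_system k F \<psi> \<mu>
    using assms(1,3-5) by unfold_locales auto
  let ?P = "\<lambda>t. pressure (sft k F) (\<lambda>x. t * \<phi> x + \<psi> x)"
  let ?m = "\<integral>y. \<phi> y \<partial>\<mu>"
  fix \<epsilon> :: real assume "0 < \<epsilon>"
  have "?P 0 = 0"
    using pressure_potential_eq_0 by simp
  moreover have "(?P has_real_derivative ?m) (at 0)"
    using assms(6) \<open>?P 0 = 0\<close> mean_le_pressure[OF assms(2)]
    by (rule has_derivative_at_0_if_supporting_line)
  ultimately obtain t where "0 < t" "?P t < t * (?m + \<epsilon> / 2)" "?P (- t) < - t * (?m - \<epsilon> / 2)"
    using secant_bounds_near_0[of ?P ?m "\<epsilon> / 2"] \<open>0 < \<epsilon>\<close> by auto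
  then show "\<exists>\<delta>>0. eventually (\<lambda>n. measure \<mu>
      {x\<in>sft k F. \<bar>birkhoff_sum n \<phi> x / real n - ?m\<bar> \<ge> \<epsilon>} \<le> exp (- real n * \<delta>)) sequentially"
    using deviation_eventually_le[OF assms(2)] \<open>0 < \<epsilon>\<close> by (intro exI[of _ "t * \<epsilon> / 4"]) auto
qed

end
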